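(* Let $X$ be an $m\times m$ Hermitian positive definite matrix and $n\ge1$ an integer. Then the function $f_{X,n}(Y):=\operatorname{tr}\{(XY^{-1})^n\}$ is strictly convex on the set of $m\times m$ Hermitian positive definite matrices $Y$. *)

theory Defs
  imports "HOL-Analysis.Analysis"
begin

text \<open>Square complex matrices of size m are modelled as complex^'m^'m, with the
  finite type 'm of cardinality m.\<close>

definition conj_transpose :: "complex^'m^'n \<Rightarrow> complex^'n^'m" where
  "conj_transpose A = (\<chi> i j. cnj (A $ j $ i))"

definition hermitian_mat :: "complex^'n^'n \<Rightarrow> bool" where
  "hermitian_mat A \<longleftrightarrow> conj_transpose A = A"

definition pos_def_mat :: "complex^'n^'n \<Rightarrow> bool" where
  "pos_def_mat A \<longleftrightarrow> hermitian_mat A \<and>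
     (\<forall>x::complex^'n. x \<noteq> 0 \<longrightarrow> Re (\<Sum>i\<in>UNIV. cnj (x $ i) * (A *v x) $ i) > 0)"

text \<open>Matrix power with respect to matrix multiplication (the ring operations on
  vec are componentwise, so the ordinary power cannot be used).\<close>
fun mat_pow :: "'a::semiring_1^'n^'n \<Rightarrow> nat \<Rightarrow> 'a^'n^'n" where
  "mat_pow A 0 = mat 1"
| "mat_pow A (Suc k) = A ** mat_pow A k"

text \<open>f_{X,n}(Y) = tr((X Y^{-1})^n), taken as a real number (its real part; the
  trace is real for Hermitian positive definite X, Y).\<close>
definition f_Xn :: "complex^'m^'m \<Rightarrow> nat \<Rightarrow> complex^'m^'m \<Rightarrow> real" where
  "f_Xn X n Y = Re (trace (mat_pow (X ** matrix_inv Y) n))"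

definition strict_convex_on :: "'a::real_vector set \<Rightarrow> ('a \<Rightarrow> real) \<Rightarrow> bool" where
  "strict_convex_on S f \<longleftrightarrow> convex S \<and>
    (\<forall>x\<in>S. \<forall>y\<in>S. x \<noteq> y \<longrightarrow> (\<forall>u>0. \<forall>v>0. u + v = 1 \<longrightarrow>
        f (u *\<^sub>R x + v *\<^sub>R y) < u * f x + v * f y))"

end

theory Submission
  imports Defs
begin

(*
  Restrict f = f_{X,n} to a segment Y(s) = A + s D with D = B - A Hermitian and nonzero, and put
  W = Y^-1, E = W D W and P_j = (X W)^j X.  Since W' = -E and E' = -2 E Y E,

    (f o Y)'  = - n tr (P_(n-1) E),
    (f o Y)'' = n (sum_(j < n-1) tr (P_j E P_(n-2-j) E) + 2 tr (P_(n-1) E Y E)).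

  All P_j are positive definite, as P_(j+2) = (X W) P_j (X W)^*.  For positive definite P, Q and
  Hermitian E ~= 0 the matrix E Q E is positive semidefinite and nonzero, hence a sum of rank-one
  matrices v v^*, so tr (P E Q E) is a sum of terms v^* P v >= 0, not all zero.  Thus (f o Y)'' > 0
  on [0, 1], and f o Y is strictly convex.
*)

lemma bounded_bilinear_matrix_mult:
  "bounded_bilinear ((**) :: 'a::{euclidean_space,real_algebra_1}^'n^'m \<Rightarrow> 'a^'k^'n \<Rightarrow> 'a^'k^'m)"
  unfolding bilinear_conv_bounded_bilinear[symmetric] bilinear_def
  by (auto intro!: linearI simp: vec_eq_iff matrix_matrix_mult_def sum.distrib
      distrib_left distrib_right scaleR_sum_right)

interpretation matrix_mult:
  bounded_bilinear "(**) :: 'a::{euclidean_space,real_algebra_1}^'n^'m \<Rightarrow> 'a^'k^'n \<Rightarrow> 'a^'k^'m"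
  by (rule bounded_bilinear_matrix_mult)

lemma bounded_linear_trace: "bounded_linear (trace :: 'a::{euclidean_space,real_algebra_1}^'n^'n \<Rightarrow> 'a)"
  unfolding linear_conv_bounded_linear[symmetric]
  by (auto intro!: linearI simp: trace_def sum.distrib scaleR_sum_right)

lemma trace_sum: "trace (\<Sum>i\<in>S. M i) = (\<Sum>i\<in>S. trace (M i :: 'a::comm_semiring_1^'n^'n))"
  by (simp add: trace_def sum.swap[of _ S])

lemma trace_uminus: "trace (- A) = - trace (A :: 'a::ring_1^'n^'n)"
  by (simp add: trace_def sum_negf)

lemma trace_scaleR: "trace (c *\<^sub>R A) = c *\<^sub>R trace (A :: 'a::real_algebra_1^'n^'n)"
  by (simp add: trace_def scaleR_sum_right)

lemma mat_pow_add: "mat_pow A i ** mat_pow A j = mat_pow A (i + j)"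
  by (induction i) (simp_all add: matrix_mul_assoc[symmetric])

lemma mat_pow_Suc_right: "mat_pow A (Suc k) = mat_pow A k ** A"
  using mat_pow_add[of A k 1] by simp

lemma matrix_inv_right: "invertible A \<Longrightarrow> A ** matrix_inv A = mat 1"
  and matrix_inv_left: "invertible A \<Longrightarrow> matrix_inv A ** A = mat 1"
  using someI_ex[of "\<lambda>A'. A ** A' = mat 1 \<and> A' ** A = mat 1"]
  by (auto simp: invertible_def matrix_inv_def)

section \<open>Conjugate transposes and Hermitian forms\<close>

lemma conj_transpose_nth [simp]: "conj_transpose A $ i $ j = cnj (A $ j $ i)"
  by (simp add: conj_transpose_def)

lemma conj_transpose_conj_transpose [simp]: "conj_transpose (conj_transpose A) = A"
  by (simp add: vec_eq_iff)

lemma conj_transpose_zero [simp]: "conj_transpose 0 = 0"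
  by (simp add: vec_eq_iff)

lemma conj_transpose_mat_1 [simp]: "conj_transpose (mat 1) = mat 1"
  by (simp add: vec_eq_iff mat_def)

lemma conj_transpose_add: "conj_transpose (A + B) = conj_transpose A + conj_transpose B"
  by (simp add: vec_eq_iff)

lemma conj_transpose_diff: "conj_transpose (A - B) = conj_transpose A - conj_transpose B"
  by (simp add: vec_eq_iff)

lemma conj_transpose_scaleR: "conj_transpose (c *\<^sub>R A) = c *\<^sub>R conj_transpose A"
  by (simp add: vec_eq_iff)

lemma conj_transpose_mult: "conj_transpose (A ** B) = conj_transpose B ** conj_transpose A"
  by (simp add: vec_eq_iff matrix_matrix_mult_def mult.commute)

lemma hermitian_mat_nth: "hermitian_mat A \<Longrightarrow> A $ j $ i = cnj (A $ i $ j)"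
  by (metis conj_transpose_nth hermitian_mat_def)

lemma hermitian_mat_congruence:
  "hermitian_mat R \<Longrightarrow> hermitian_mat (S ** R ** conj_transpose S)"
  by (simp add: hermitian_mat_def conj_transpose_mult matrix_mul_assoc)

definition cinner :: "complex^'n \<Rightarrow> complex^'n \<Rightarrow> complex" where
  "cinner x y = (\<Sum>i\<in>UNIV. cnj (x $ i) * y $ i)"

definition quad_form :: "complex^'n^'n \<Rightarrow> complex^'n \<Rightarrow> complex" where
  "quad_form A x = cinner x (A *v x)"

definition psd_mat :: "complex^'n^'n \<Rightarrow> bool" where
  "psd_mat A \<longleftrightarrow> hermitian_mat A \<and> (\<forall>x. 0 \<le> Re (quad_form A x))"

lemma pos_def_mat_iff_quad_form:
  "pos_def_mat A \<longleftrightarrow> hermitian_mat A \<and> (\<forall>x. x \<noteq> 0 \<longrightarrow> 0 < Re (quad_form A x))"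
  by (simp add: pos_def_mat_def quad_form_def cinner_def)

lemma pos_def_mat_hermitian: "pos_def_mat A \<Longrightarrow> conj_transpose A = A"
  by (simp add: pos_def_mat_iff_quad_form hermitian_mat_def)

lemma cinner_commute: "cinner y x = cnj (cinner x y)"
  by (simp add: cinner_def mult.commute)

lemma cinner_add_left: "cinner (x + y) z = cinner x z + cinner y z"
  by (simp add: cinner_def sum.distrib algebra_simps)

lemma cinner_add_right: "cinner x (y + z) = cinner x y + cinner x z"
  by (simp add: cinner_def sum.distrib algebra_simps)

lemma cinner_scale_left: "cinner (c *s x) y = cnj c * cinner x y"
  by (simp add: cinner_def sum_distrib_left algebra_simps)

lemma cinner_scale_right: "cinner x (c *s y) = c * cinner x y"
  by (simp add: cinner_def sum_distrib_left algebra_simps)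

lemma cinner_axis_left: "cinner (axis k 1) y = y $ k"
  by (simp add: cinner_def axis_def if_distrib[of cnj] if_distrib[of "\<lambda>c. c * _"] cong: if_cong)

lemma matrix_vector_mult_axis: "(A *v axis k 1) $ i = A $ i $ k"
  by (simp add: matrix_vector_mult_def axis_def if_distrib[of "\<lambda>c. _ * c"] cong: if_cong)

lemma cinner_matrix_vector_mult_right:
  "cinner x (S *v y) = cinner (conj_transpose S *v x) y"
proof -
  have "cinner x (S *v y) = (\<Sum>i\<in>UNIV. \<Sum>j\<in>UNIV. cnj (x $ i) * (S $ i $ j * y $ j))"
    by (simp add: cinner_def matrix_vector_mult_def sum_distrib_left)
  also have "\<dots> = (\<Sum>j\<in>UNIV. \<Sum>i\<in>UNIV. cnj (x $ i) * (S $ i $ j * y $ j))"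
    by (rule sum.swap)
  also have "\<dots> = cinner (conj_transpose S *v x) y"
    by (simp add: cinner_def matrix_vector_mult_def sum_distrib_left mult_ac)
  finally show ?thesis .
qed

lemma quad_form_congruence:
  "quad_form (S ** R ** conj_transpose S) x = quad_form R (conj_transpose S *v x)"
  by (simp add: quad_form_def cinner_matrix_vector_mult_right matrix_vector_mul_assoc[symmetric])

lemma quad_form_add:
  "quad_form A (x + y) = quad_form A x + quad_form A y + cinner x (A *v y) + cinner y (A *v x)"
  by (simp add: quad_form_def matrix_vector_right_distrib cinner_add_left cinner_add_right)

lemma quad_form_scale: "quad_form A (c *s x) = cnj c * c * quad_form A x"
  by (simp add: quad_form_def vector_scalar_commute cinner_scale_left cinner_scale_right)

lemma quad_form_axis: "quad_form A (axis k 1) = A $ k $ k"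
  by (simp add: quad_form_def cinner_axis_left matrix_vector_mult_axis)

lemma quad_form_add_mat: "quad_form (A + B) x = quad_form A x + quad_form B x"
  by (simp add: quad_form_def cinner_def matrix_vector_mult_def sum.distrib algebra_simps)

lemma quad_form_diff_mat: "quad_form (A - B) x = quad_form A x - quad_form B x"
  by (simp add: quad_form_def cinner_def matrix_vector_mult_def sum_subtractf algebra_simps)

lemma quad_form_scaleR_mat: "quad_form (c *\<^sub>R A) x = of_real c * quad_form A x"
  by (simp add: quad_form_def cinner_def matrix_vector_mult_def sum_distrib_left)
    (simp add: scaleR_conv_of_real mult_ac)

lemma quad_form_zero [simp]: "quad_form A 0 = 0"
  by (simp add: quad_form_def cinner_def)

lemma quad_form_zero_mat [simp]: "quad_form 0 x = 0"
  by (simp add: quad_form_def cinner_def)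

lemma pos_def_mat_imp_psd_mat: "pos_def_mat A \<Longrightarrow> psd_mat A"
  unfolding psd_mat_def pos_def_mat_iff_quad_form
  by (metis order.strict_implies_order order_refl quad_form_zero zero_complex.sel(1))

lemma invertible_conj_transpose: "invertible S \<Longrightarrow> invertible (conj_transpose S)"
  unfolding invertible_def by (metis conj_transpose_mat_1 conj_transpose_mult)

lemma pos_def_mat_invertible:
  assumes "pos_def_mat A" shows "invertible A"
proof -
  have "x = 0" if "A *v x = 0" for x
    using assms that by (auto simp: pos_def_mat_iff_quad_form quad_form_def cinner_def)
  then show ?thesis
    using matrix_left_invertible_ker invertible_left_inverse by blast
qed

lemma psd_mat_congruence: "psd_mat R \<Longrightarrow> psd_mat (S ** R ** conj_transpose S)"
  by (simp add: psd_mat_def hermitian_mat_congruence quad_form_congruence)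

lemma pos_def_mat_congruence:
  assumes "pos_def_mat R" "invertible S"
  shows "pos_def_mat (S ** R ** conj_transpose S)"
proof -
  have "inj ((*v) (conj_transpose S))"
    using assms(2) by (simp add: inj_matrix_vector_mult invertible_conj_transpose)
  then have "conj_transpose S *v x \<noteq> 0" if "x \<noteq> 0" for x
    using that by (metis injD matrix_vector_mult_0_right)
  moreover have "hermitian_mat R"
    using assms(1) by (simp add: pos_def_mat_iff_quad_form)
  ultimately show ?thesis
    using assms(1) hermitian_mat_congruence
    by (simp add: pos_def_mat_iff_quad_form quad_form_congruence)
qed

lemma congruence_neq_zero:
  assumes "pos_def_mat Q" "E \<noteq> 0"
  shows "E ** Q ** conj_transpose E \<noteq> 0"
proof -
  obtain i j where "conj_transpose E $ i $ j \<noteq> 0"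
    using assms(2) by (metis conj_transpose_conj_transpose conj_transpose_zero vec_eq_iff zero_index)
  then have "conj_transpose E *v axis j 1 \<noteq> 0"
    by (metis matrix_vector_mult_axis zero_index)
  then have "0 < Re (quad_form (E ** Q ** conj_transpose E) (axis j 1))"
    using assms(1) by (simp add: quad_form_congruence pos_def_mat_iff_quad_form)
  then show ?thesis by auto
qed

lemma pos_def_mat_matrix_inv:
  assumes "pos_def_mat Y"
  shows "pos_def_mat (matrix_inv Y)"
proof -
  let ?W = "matrix_inv Y"
  have inv: "invertible Y" by (rule pos_def_mat_invertible[OF assms])
  have "conj_transpose ?W = conj_transpose ?W ** (Y ** ?W)"
    by (simp add: matrix_inv_right[OF inv])
  also have "\<dots> = conj_transpose (Y ** ?W) ** ?W"
    by (simp add: conj_transpose_mult pos_def_mat_hermitian[OF assms] matrix_mul_assoc)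
  also have "\<dots> = ?W"
    by (simp add: matrix_inv_right[OF inv])
  finally have "?W ** Y ** conj_transpose ?W = ?W"
    by (simp add: matrix_inv_left[OF inv])
  moreover have "invertible ?W"
    using matrix_inv_left[OF inv] matrix_inv_right[OF inv] invertible_def by blast
  ultimately show ?thesis
    using pos_def_mat_congruence[OF assms] by metis
qed

lemma convex_pos_def_mat: "convex {Y. pos_def_mat Y}"
proof (rule convexI)
  fix A B :: "complex^'n^'n" and u v :: real
  assume "A \<in> {Y. pos_def_mat Y}" "B \<in> {Y. pos_def_mat Y}" "0 \<le> u" "0 \<le> v" "u + v = 1"
  then have A: "pos_def_mat A" and B: "pos_def_mat B" and uv: "0 \<le> u" "0 \<le> v" "0 < u \<or> 0 < v"
    by auto
  have "hermitian_mat (u *\<^sub>R A + v *\<^sub>R B)"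
    using A B by (simp add: hermitian_mat_def conj_transpose_add conj_transpose_scaleR pos_def_mat_hermitian)
  moreover have "0 < Re (quad_form (u *\<^sub>R A + v *\<^sub>R B) x)" if "x \<noteq> 0" for x
  proof -
    have "0 < Re (quad_form A x)" "0 < Re (quad_form B x)"
      using A B that by (auto simp: pos_def_mat_iff_quad_form)
    with uv have "0 < u * Re (quad_form A x) + v * Re (quad_form B x)"
      by (auto intro: add_pos_nonneg add_nonneg_pos)
    then show ?thesis by (simp add: quad_form_add_mat quad_form_scaleR_mat)
  qed
  ultimately show "u *\<^sub>R A + v *\<^sub>R B \<in> {Y. pos_def_mat Y}"
    by (simp add: pos_def_mat_iff_quad_form)
qed

lemma pos_def_mat_pow_mult:
  assumes X: "pos_def_mat X" and W: "pos_def_mat W"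
  shows "pos_def_mat (mat_pow (X ** W) k ** X)"
proof -
  let ?K = "X ** W"
  have invK: "invertible ?K"
    by (intro invertible_mult pos_def_mat_invertible X W)
  have "pos_def_mat (mat_pow ?K k ** X) \<and> pos_def_mat (mat_pow ?K (Suc k) ** X)"
  proof (induction k)
    case 0
    have "pos_def_mat (X ** W ** conj_transpose X)"
      by (rule pos_def_mat_congruence[OF W pos_def_mat_invertible[OF X]])
    then show ?case
      using X by (simp add: pos_def_mat_hermitian[OF X])
  next
    case (Suc k)
    have "pos_def_mat (?K ** (mat_pow ?K k ** X) ** conj_transpose ?K)"
      using Suc.IH invK by (intro pos_def_mat_congruence) auto
    also have "?K ** (mat_pow ?K k ** X) ** conj_transpose ?K = ?K ** mat_pow ?K k ** ?K ** X"
      by (simp add: conj_transpose_mult pos_def_mat_hermitian[OF X] pos_def_mat_hermitian[OF W]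
          matrix_mul_assoc)
    also have "?K ** mat_pow ?K k ** ?K = mat_pow ?K (Suc (Suc k))"
      using mat_pow_Suc_right[of ?K "Suc k"] by simp
    finally show ?case using Suc.IH by simp
  qed
  then show ?thesis ..
qed

section \<open>Positive semidefinite matrices as sums of rank-one matrices\<close>

definition outer_prod :: "complex^'n \<Rightarrow> complex^'n^'n" where
  "outer_prod v = (\<chi> i j. v $ i * cnj (v $ j))"

lemma outer_prod_zero [simp]: "outer_prod 0 = 0"
  by (simp add: outer_prod_def vec_eq_iff)

lemma outer_prod_scaleR: "outer_prod (c *\<^sub>R v) = c\<^sup>2 *\<^sub>R outer_prod v"
  by (simp add: outer_prod_def vec_eq_iff) (simp add: scaleR_conv_of_real power2_eq_square)

lemma hermitian_outer_prod: "hermitian_mat (outer_prod v)"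
  by (simp add: hermitian_mat_def outer_prod_def vec_eq_iff mult.commute)

lemma quad_form_outer_prod: "quad_form (outer_prod v) x = cnj (cinner v x) * cinner v x"
proof -
  have "outer_prod v *v x = cinner v x *s v"
    by (simp add: vec_eq_iff outer_prod_def matrix_vector_mult_def cinner_def sum_distrib_left mult_ac)
  then show ?thesis
    by (simp add: quad_form_def cinner_scale_right cinner_commute[of x v])
qed

lemma trace_mult_outer_prod: "trace (P ** outer_prod v) = quad_form P v"
  by (simp add: trace_def matrix_matrix_mult_def outer_prod_def quad_form_def cinner_def
      matrix_vector_mult_def sum_distrib_left mult_ac)

lemma psd_mat_diag:
  assumes "psd_mat M"
  shows "M $ k $ k = of_real (Re (M $ k $ k))" "0 \<le> Re (M $ k $ k)"
proof -
  have "cnj (M $ k $ k) = M $ k $ k"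
    using assms hermitian_mat_nth[of M k k] by (simp add: psd_mat_def)
  then show "M $ k $ k = of_real (Re (M $ k $ k))"
    by (metis Reals_cnj_iff of_real_Re)
  show "0 \<le> Re (M $ k $ k)"
    using assms quad_form_axis[of M k] by (metis psd_mat_def)
qed

lemma psd_mat_zero_diag_row:
  assumes "psd_mat M" "M $ k $ k = 0"
  shows "M $ k $ j = 0"
proof (rule ccontr)
  define a where "a = M $ k $ j"
  assume "M $ k $ j \<noteq> 0"
  then have "a \<noteq> 0"
    by (simp add: a_def)
  have "M $ j $ k = cnj a"
    using assms(1) hermitian_mat_nth[of M k j] by (simp add: psd_mat_def a_def)
  define t where "t = (Re (M $ j $ j) + 1) / (2 * (cmod a)\<^sup>2)"
  define c where "c = - (of_real t * a)"
  define x where "x = axis j 1 + c *s axis k 1"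
  have "quad_form M x = M $ j $ j + (c * cnj a + cnj c * a)"
    using assms(2) \<open>M $ j $ k = cnj a\<close>
    by (simp add: x_def quad_form_add quad_form_scale quad_form_axis vector_scalar_commute
        cinner_scale_left cinner_scale_right cinner_axis_left matrix_vector_mult_axis a_def)
  also have "c * cnj a + cnj c * a = - of_real (2 * t * (cmod a)\<^sup>2)"
    using complex_norm_square[of a] by (simp add: c_def algebra_simps)
  finally have "quad_form M x = M $ j $ j - of_real (2 * t * (cmod a)\<^sup>2)"
    by simp
  moreover have "2 * t * (cmod a)\<^sup>2 = Re (M $ j $ j) + 1"
    using \<open>a \<noteq> 0\<close> by (simp add: t_def)
  ultimately have "Re (quad_form M x) = -1"
    by simp
  then show False
    using assms(1) by (metis psd_mat_def neg_0_le_iff_le not_one_le_zero)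
qed

lemma psd_mat_schur_complement:
  assumes psd: "psd_mat M" and d: "M $ k $ k = of_real d" "0 < d"
  shows "psd_mat (M - (1 / d) *\<^sub>R outer_prod (column k M))"
proof -
  let ?m = "column k M"
  have herm: "hermitian_mat M"
    using psd by (simp add: psd_mat_def)
  have "hermitian_mat (M - (1 / d) *\<^sub>R outer_prod ?m)"
    using herm hermitian_outer_prod[of ?m]
    by (simp add: hermitian_mat_def conj_transpose_diff conj_transpose_scaleR)
  moreover have "0 \<le> Re (quad_form (M - (1 / d) *\<^sub>R outer_prod ?m) x)" for x
  proof -
    define z where "z = cinner ?m x"
    have Mx: "(M *v x) $ k = z"
      using hermitian_mat_nth[OF herm, of _ k]
      by (simp add: z_def cinner_def matrix_vector_mult_def column_def)
    have Mek: "M *v axis k 1 = ?m"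
      by (simp add: vec_eq_iff matrix_vector_mult_axis column_def)
    \<comment> \<open>Completing the square: the Schur complement's form at x is the form of M
      at x - (z/d) e_k.\<close>
    define c where "c = - z / of_real d"
    have "quad_form M (x + c *s axis k 1)
        = quad_form M x + cnj c * c * of_real d + c * cnj z + cnj c * z"
      using d(1) Mx
      by (simp add: quad_form_add quad_form_scale quad_form_axis vector_scalar_commute Mek
          cinner_scale_left cinner_scale_right cinner_axis_left z_def cinner_commute[of x])
    also have "\<dots> = quad_form (M - (1 / d) *\<^sub>R outer_prod ?m) x"
      using d(2)
      by (simp add: c_def quad_form_diff_mat quad_form_scaleR_mat quad_form_outer_prod
          z_def[symmetric] field_simps)
    finally show ?thesis
      using psd by (metis psd_mat_def)
  qed
  ultimately show ?thesis
    by (simp add: psd_mat_def)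
qed

lemma psd_mat_sum_outer_prod_support:
  assumes "finite S" "psd_mat M" "\<And>i j. i \<notin> S \<Longrightarrow> M $ i $ j = 0"
  shows "\<exists>v. M = (\<Sum>i\<in>S. outer_prod (v i))"
  using assms
proof (induction S arbitrary: M rule: finite_induct)
  case empty
  then have "M = 0"
    by (simp add: vec_eq_iff)
  then show ?case
    by simp
next
  case (insert k S)
  have herm: "hermitian_mat M"
    using insert.prems(1) by (simp add: psd_mat_def)
  define d where "d = Re (M $ k $ k)"
  have Mkk: "M $ k $ k = of_real d" and "0 \<le> d"
    using psd_mat_diag[OF insert.prems(1)] by (simp_all add: d_def)
  show ?case
  proof (cases "d = 0")
    case True
    then have "M $ i $ j = 0" if "i \<notin> S" for i j
      using that insert.prems Mkk psd_mat_zero_diag_row[of M k j] by (cases "i = k") auto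
    then obtain v where "M = (\<Sum>i\<in>S. outer_prod (v i))"
      using insert.IH insert.prems(1) by blast
    moreover have "(\<Sum>i\<in>S. outer_prod ((v(k := 0)) i)) = (\<Sum>i\<in>S. outer_prod (v i))"
      using insert.hyps by (intro sum.cong) auto
    ultimately have "M = (\<Sum>i\<in>insert k S. outer_prod ((v(k := 0)) i))"
      using insert.hyps by simp
    then show ?thesis by blast
  next
    case False
    then have "0 < d"
      using \<open>0 \<le> d\<close> by simp
    define u where "u = (1 / sqrt d) *\<^sub>R column k M"
    have u: "outer_prod u = (1 / d) *\<^sub>R outer_prod (column k M)"
      using \<open>0 < d\<close> by (simp add: u_def outer_prod_scaleR power_divide)
    define M' where "M' = M - outer_prod u"
    have "psd_mat M'"
      unfolding M'_def u by (rule psd_mat_schur_complement[OF insert.prems(1) Mkk \<open>0 < d\<close>])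
    moreover have "M' $ i $ j = 0" if "i \<notin> S" for i j
    proof (cases "i = k")
      case True
      then show ?thesis
        using \<open>0 < d\<close> Mkk hermitian_mat_nth[OF herm, of j k] unfolding M'_def u
        by (simp add: outer_prod_def column_def) (simp add: scaleR_conv_of_real)
    next
      case False
      then show ?thesis
        using that insert.prems(2)[of i] unfolding M'_def u
        by (simp add: outer_prod_def column_def)
    qed
    ultimately obtain v where "M' = (\<Sum>i\<in>S. outer_prod (v i))"
      using insert.IH by blast
    moreover have "(\<Sum>i\<in>S. outer_prod ((v(k := u)) i)) = (\<Sum>i\<in>S. outer_prod (v i))"
      using insert.hyps by (intro sum.cong) auto
    moreover have "M = outer_prod u + M'"
      by (simp add: M'_def)
    ultimately have "M = (\<Sum>i\<in>insert k S. outer_prod ((v(k := u)) i))"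
      using insert.hyps by simp
    then show ?thesis by blast
  qed
qed

lemma psd_mat_sum_outer_prod:
  fixes M :: "complex^'n^'n"
  shows "psd_mat M \<Longrightarrow> \<exists>v. M = (\<Sum>i::'n\<in>UNIV. outer_prod (v i))"
  using psd_mat_sum_outer_prod_support[of UNIV M] by simp

lemma trace_mult_psd_mat_pos:
  fixes P M :: "complex^'n^'n"
  assumes P: "pos_def_mat P" and M: "psd_mat M" "M \<noteq> 0"
  shows "0 < Re (trace (P ** M))"
proof -
  obtain v where v: "M = (\<Sum>i::'n\<in>UNIV. outer_prod (v i))"
    using psd_mat_sum_outer_prod[OF M(1)] by blast
  then obtain i where "v i \<noteq> 0"
    using M(2) by fastforce
  have "Re (trace (P ** M)) = (\<Sum>i\<in>UNIV. Re (quad_form P (v i)))"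
    by (simp add: v matrix_mult.sum_right trace_sum trace_mult_outer_prod)
  also have "\<dots> > 0"
    using P \<open>v i \<noteq> 0\<close> pos_def_mat_imp_psd_mat[OF P]
    by (intro sum_pos2[of _ i]) (auto simp: pos_def_mat_iff_quad_form psd_mat_def)
  finally show ?thesis .
qed

lemma trace_sandwich_pos:
  assumes "pos_def_mat P" "pos_def_mat Q" "hermitian_mat E" "E \<noteq> 0"
  shows "0 < Re (trace (P ** E ** Q ** E))"
proof -
  have "P ** E ** Q ** E = P ** (E ** Q ** conj_transpose E)"
    using assms(3) by (simp add: hermitian_mat_def matrix_mul_assoc)
  then show ?thesis
    using trace_mult_psd_mat_pos[OF assms(1) psd_mat_congruence congruence_neq_zero[OF assms(2,4)]]
      pos_def_mat_imp_psd_mat[OF assms(2)] by simp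
qed

section \<open>Differentiating matrix functions along a line\<close>

lemma isCont_det: "isCont det (A :: 'a::real_normed_field^'n^'n)"
  unfolding det_def[abs_def] by (intro continuous_intros isCont_vec_nth continuous_ident)

lemma matrix_inv_cramer:
  fixes A :: "'a::field^'n^'n"
  assumes "invertible A"
  shows "matrix_inv A = (\<chi> k j. det (\<chi> i l. if l = k then axis j 1 $ i else A $ i $ l) / det A)"
proof -
  have "A *v (matrix_inv A *v axis j 1) = axis j 1" for j
    by (simp add: matrix_vector_mul_assoc matrix_inv_right[OF assms])
  then have "matrix_inv A *v axis j 1
      = (\<chi> k. det (\<chi> i l. if l = k then axis j 1 $ i else A $ i $ l) / det A)" for j
    using cramer[of A] assms invertible_det_nz by blast
  then show ?thesis
    by (simp add: vec_eq_iff flip: matrix_vector_mult_axis)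
qed

lemma isCont_matrix_inv:
  fixes A :: "'a::real_normed_field^'n^'n"
  assumes "invertible A"
  shows "isCont matrix_inv A"
proof -
  let ?C = "\<lambda>B. \<chi> k j. det (\<chi> i l. if l = k then axis j 1 $ i else B $ i $ l) / det B"
  have "det A \<noteq> 0"
    using assms invertible_det_nz by blast
  then have "eventually (\<lambda>B. det B \<noteq> 0) (nhds A)"
    using isCont_det[of A] by (simp add: eventually_nhds_conv_at isCont_def tendsto_imp_eventually_ne)
  then have "eventually (\<lambda>B. matrix_inv B = ?C B) (nhds A)"
    by eventually_elim (simp add: matrix_inv_cramer invertible_det_nz)
  moreover have "isCont ?C A"
  proof -
    have "isCont (\<lambda>B. \<chi> i l. if l = k then axis j 1 $ i else B $ i $ l) A" for k j
      unfolding isCont_def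
    proof (intro tendsto_vec_lambda)
      show "((\<lambda>B. if l = k then axis j 1 $ i else B $ i $ l)
          \<longlongrightarrow> (if l = k then axis j 1 $ i else A $ i $ l)) (at A)" for i l
        by (cases "l = k") (simp_all add: tendsto_vec_nth)
    qed
    then have "isCont (\<lambda>B. det (\<chi> i l. if l = k then axis j 1 $ i else B $ i $ l)) A" for k j
      by (rule isCont_o2[OF _ isCont_det])
    then show ?thesis
      unfolding isCont_def using \<open>det A \<noteq> 0\<close> isCont_det[of A]
      by (intro tendsto_vec_lambda tendsto_divide) (auto simp: isCont_def)
  qed
  ultimately show ?thesis
    using isCont_cong[of matrix_inv ?C A] by blast
qed

lemma has_vector_derivative_caratheodory:
  fixes f g :: "real \<Rightarrow> 'a::real_normed_vector"
  assumes slope: "eventually (\<lambda>s. f s - f t = (s - t) *\<^sub>R g s) (at t)" and cont: "isCont g t"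
  shows "(f has_vector_derivative g t) (at t)"
  unfolding has_vector_derivative_def has_derivative_iff_norm
proof (intro conjI)
  show "bounded_linear (\<lambda>h. h *\<^sub>R g t)"
    by (rule bounded_linear_scaleR_left)
  have "((\<lambda>s. norm (g s - g t)) \<longlongrightarrow> 0) (at t)"
    using cont by (simp add: isCont_def LIM_zero tendsto_norm_zero)
  moreover have "eventually (\<lambda>s. norm (g s - g t)
      = norm (f s - f t - (s - t) *\<^sub>R g t) / norm (s - t)) (at t)"
    using slope eventually_neq_at_within[of t t UNIV]
  proof eventually_elim
    case (elim s)
    then have "f s - f t - (s - t) *\<^sub>R g t = (s - t) *\<^sub>R (g s - g t)"
      by (simp add: scaleR_diff_right)
    then show ?case
      using elim by simp
  qed
  ultimately show "((\<lambda>s. norm (f s - f t - (s - t) *\<^sub>R g t) / norm (s - t)) \<longlongrightarrow> 0) (at t)"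
    by (rule Lim_transform_eventually)
qed

lemma has_vector_derivative_matrix_inv_line:
  fixes A D :: "'a::{real_normed_field,euclidean_space}^'n^'n"
  defines "W \<equiv> \<lambda>s. matrix_inv (A + s *\<^sub>R D)"
  assumes inv: "invertible (A + t *\<^sub>R D)"
  shows "(W has_vector_derivative - (W t ** D ** W t)) (at t)"
proof (rule has_vector_derivative_caratheodory[where g = "\<lambda>s. - (W s ** D ** W t)"])
  have "isCont (\<lambda>s. A + s *\<^sub>R D) t"
    by (intro continuous_intros)
  then have cont: "isCont W t"
    unfolding W_def using isCont_matrix_inv[OF inv] by (rule isCont_o2)
  show "isCont (\<lambda>s. - (W s ** D ** W t)) t"
    by (intro isCont_minus matrix_mult.isCont cont continuous_const)
  have "isCont (\<lambda>s. det (A + s *\<^sub>R D)) t"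
    using \<open>isCont (\<lambda>s. A + s *\<^sub>R D) t\<close> isCont_det by (rule isCont_o2)
  then have "eventually (\<lambda>s. det (A + s *\<^sub>R D) \<noteq> 0) (at t)"
    using inv unfolding isCont_def invertible_det_nz by (rule tendsto_imp_eventually_ne)
  then show "eventually (\<lambda>s. W s - W t = (s - t) *\<^sub>R - (W s ** D ** W t)) (at t)"
  proof eventually_elim
    case (elim s)
    then have invs: "invertible (A + s *\<^sub>R D)"
      by (simp add: invertible_det_nz)
    let ?Y = "\<lambda>s. A + s *\<^sub>R D"
    have "W s ** (?Y t - ?Y s) ** W t = W s ** (?Y t ** W t) - (W s ** ?Y s) ** W t"
      by (simp only: matrix_mult.diff_left matrix_mult.diff_right matrix_mul_assoc)
    also have "\<dots> = W s - W t"
      by (simp add: W_def matrix_inv_right[OF inv] matrix_inv_left[OF invs])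
    finally have "W s - W t = W s ** ((t - s) *\<^sub>R D) ** W t"
      by (simp add: scaleR_diff_left)
    also have "\<dots> = (s - t) *\<^sub>R - (W s ** D ** W t)"
      by (simp add: matrix_mult.scaleR_left matrix_mult.scaleR_right flip: scaleR_minus_left)
    finally show ?case .
  qed
qed

lemma has_vector_derivative_mat_pow:
  fixes K :: "real \<Rightarrow> 'a::{euclidean_space,real_algebra_1}^'n^'n"
  assumes "(K has_vector_derivative K') (at t)"
  shows "((\<lambda>s. mat_pow (K s) k) has_vector_derivative
           (\<Sum>j<k. mat_pow (K t) j ** K' ** mat_pow (K t) (k - 1 - j))) (at t)"
proof (induction k)
  case 0
  then show ?case by simp
next
  case (Suc k)
  have "(\<Sum>j<Suc k. mat_pow (K t) j ** K' ** mat_pow (K t) (Suc k - 1 - j))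
      = K t ** (\<Sum>j<k. mat_pow (K t) j ** K' ** mat_pow (K t) (k - 1 - j)) + K' ** mat_pow (K t) k"
    unfolding sum.lessThan_Suc_shift
    by (simp add: matrix_mult.sum_right matrix_mul_assoc add.commute)
  then show ?case
    using matrix_mult.has_vector_derivative[OF assms Suc.IH] by simp
qed

lemma trace_sum_mat_pow_mult:
  fixes K K' :: "'a::comm_semiring_1^'n^'n"
  shows "trace (\<Sum>j<k. mat_pow K j ** K' ** mat_pow K (k - 1 - j))
       = of_nat k * trace (mat_pow K (k - 1) ** K')"
proof -
  have "trace (mat_pow K j ** K' ** mat_pow K (k - 1 - j)) = trace (mat_pow K (k - 1) ** K')"
    if "j < k" for j
  proof -
    have "trace (mat_pow K j ** K' ** mat_pow K (k - 1 - j))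
        = trace (mat_pow K (k - 1 - j) ** mat_pow K j ** K')"
      using trace_mul_sym[of "mat_pow K j ** K'" "mat_pow K (k - 1 - j)"]
      by (simp add: matrix_mul_assoc)
    then show ?thesis
      using that by (simp add: mat_pow_add)
  qed
  then show ?thesis
    by (simp add: trace_sum)
qed

lemma strict_convex_comb_of_deriv2_pos:
  fixes g g' g'' :: "real \<Rightarrow> real"
  assumes g': "\<And>s. s \<in> {0..1} \<Longrightarrow> (g has_real_derivative g' s) (at s)"
    and g'': "\<And>s. s \<in> {0..1} \<Longrightarrow> (g' has_real_derivative g'' s) (at s)"
    and pos: "\<And>s. s \<in> {0..1} \<Longrightarrow> 0 < g'' s"
    and v: "0 < v" "v < 1"
  shows "g v < (1 - v) * g 0 + v * g 1"
proof -
  obtain a where a: "0 < a" "a < v" "g v - g 0 = (v - 0) * g' a"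
    using MVT2[of 0 v g g'] g' v by auto
  obtain b where b: "v < b" "b < 1" "g 1 - g v = (1 - v) * g' b"
    using MVT2[of v 1 g g'] g' v by auto
  have "\<exists>y. (g' has_real_derivative y) (at x) \<and> 0 < y" if "a \<le> x" "x \<le> b" for x
    using that a b by (intro exI[of _ "g'' x"] conjI g'' pos) auto
  then have "g' a < g' b"
    using a b v by (intro DERIV_pos_imp_increasing[of a b g']) auto
  then have "0 < v * (1 - v) * (g' b - g' a)"
    using v by simp
  also have "\<dots> = (1 - v) * g 0 + v * g 1 - g v"
  proof -
    have g0: "g 0 = g v - v * g' a" and g1: "g 1 = g v + (1 - v) * g' b"
      using a(3) b(3) by simp_all
    show ?thesis
      unfolding g0 g1 by (simp add: algebra_simps)
  qed
  finally show ?thesis by simp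
qed

section \<open>Strict convexity of f_Xn along segments\<close>

lemma has_real_derivative_Re_trace:
  fixes F :: "real \<Rightarrow> complex^'n^'n"
  assumes "(F has_vector_derivative F') (at t)"
  shows "((\<lambda>s. Re (trace (F s))) has_real_derivative Re (trace F')) (at t)"
  using bounded_linear.has_vector_derivative[OF
      bounded_linear_compose[OF bounded_linear_Re bounded_linear_trace] assms]
  by (simp add: has_real_derivative_iff_has_vector_derivative)

lemma has_vector_derivative_mult_matrix_inv_line:
  fixes X A D :: "complex^'n^'n" and t :: real
  defines "W \<equiv> matrix_inv (A + t *\<^sub>R D)"
  assumes "invertible (A + t *\<^sub>R D)"
  shows "((\<lambda>s. X ** matrix_inv (A + s *\<^sub>R D)) has_vector_derivative - (X ** (W ** D ** W))) (at t)"
  using matrix_mult.has_vector_derivative[OF has_vector_derivative_const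
      has_vector_derivative_matrix_inv_line[OF assms(2)]]
  by (simp add: W_def matrix_mult.zero_left matrix_mult.minus_right)

lemma has_real_derivative_f_Xn_line:
  fixes X A D :: "complex^'n^'n" and t :: real
  defines "W \<equiv> matrix_inv (A + t *\<^sub>R D)"
  assumes "invertible (A + t *\<^sub>R D)"
  shows "((\<lambda>s. f_Xn X n (A + s *\<^sub>R D)) has_real_derivative
           - real n * Re (trace (mat_pow (X ** W) (n - 1) ** X ** (W ** D ** W)))) (at t)"
proof -
  let ?K = "X ** W"
  have "((\<lambda>s. f_Xn X n (A + s *\<^sub>R D)) has_real_derivative
      Re (trace (\<Sum>j<n. mat_pow ?K j ** - (X ** (W ** D ** W)) ** mat_pow ?K (n - 1 - j)))) (at t)"
    unfolding f_Xn_def W_def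
    by (intro has_real_derivative_Re_trace has_vector_derivative_mat_pow
        has_vector_derivative_mult_matrix_inv_line assms)
  also have "trace (\<Sum>j<n. mat_pow ?K j ** - (X ** (W ** D ** W)) ** mat_pow ?K (n - 1 - j))
      = - of_nat n * trace (mat_pow ?K (n - 1) ** X ** (W ** D ** W))"
    unfolding trace_sum_mat_pow_mult
    by (simp add: matrix_mult.minus_right trace_uminus matrix_mul_assoc)
  finally show ?thesis
    by simp
qed

lemma has_vector_derivative_inv_sandwich_line:
  fixes A D :: "complex^'n^'n" and t :: real
  defines "Y \<equiv> A + t *\<^sub>R D" and "W \<equiv> matrix_inv (A + t *\<^sub>R D)"
  defines "E \<equiv> W ** D ** W"
  assumes inv: "invertible Y"
  shows "((\<lambda>s. matrix_inv (A + s *\<^sub>R D) ** D ** matrix_inv (A + s *\<^sub>R D))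
           has_vector_derivative - (2 *\<^sub>R (E ** Y ** E))) (at t)"
proof -
  have dW: "((\<lambda>s. matrix_inv (A + s *\<^sub>R D)) has_vector_derivative - E) (at t)"
    using has_vector_derivative_matrix_inv_line[of A t D] inv by (simp add: Y_def W_def E_def)
  have "E ** Y ** E = W ** D ** W ** D ** W"
    using matrix_inv_left[OF inv]
    by (simp add: E_def W_def Y_def matrix_mul_assoc) (simp flip: matrix_mul_assoc)
  then have "W ** D ** - E + - E ** D ** W = - (2 *\<^sub>R (E ** Y ** E))"
    by (simp add: E_def matrix_mult.minus_left matrix_mult.minus_right matrix_mul_assoc scaleR_2)
  then show ?thesis
    using matrix_mult.has_vector_derivative[OF matrix_mult.has_vector_derivative[OF dW
          has_vector_derivative_const[of D]] dW]
    by (simp add: matrix_mult.zero_right flip: W_def)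
qed

lemma has_vector_derivative_mat_pow_mult_line:
  fixes X A D :: "complex^'n^'n" and t :: real
  defines "W \<equiv> matrix_inv (A + t *\<^sub>R D)"
  defines "E \<equiv> W ** D ** W" and "P \<equiv> \<lambda>j. mat_pow (X ** W) j ** X"
  assumes "invertible (A + t *\<^sub>R D)"
  shows "((\<lambda>s. mat_pow (X ** matrix_inv (A + s *\<^sub>R D)) k ** X)
           has_vector_derivative - (\<Sum>j<k. P j ** E ** P (k - 1 - j))) (at t)"
proof -
  let ?K = "X ** W"
  have "(\<Sum>j<k. mat_pow ?K j ** - (X ** E) ** mat_pow ?K (k - 1 - j)) ** X
      = - (\<Sum>j<k. P j ** E ** P (k - 1 - j))"
    by (simp add: P_def matrix_mult.sum_left matrix_mult.minus_left matrix_mult.minus_right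
        matrix_mul_assoc sum_negf)
  moreover have "((\<lambda>s. mat_pow (X ** matrix_inv (A + s *\<^sub>R D)) k ** X) has_vector_derivative
      (\<Sum>j<k. mat_pow ?K j ** - (X ** E) ** mat_pow ?K (k - 1 - j)) ** X) (at t)"
    using matrix_mult.has_vector_derivative[OF has_vector_derivative_mat_pow[OF
          has_vector_derivative_mult_matrix_inv_line[OF assms(4), where X = X], where k = k]
          has_vector_derivative_const[of X]]
    by (simp add: matrix_mult.zero_right flip: W_def E_def)
  ultimately show ?thesis
    by simp
qed

lemma has_real_derivative_f_Xn_line_derivative:
  fixes X A D :: "complex^'n^'n" and t :: real
  defines "Y \<equiv> A + t *\<^sub>R D" and "W \<equiv> matrix_inv (A + t *\<^sub>R D)"
  defines "E \<equiv> W ** D ** W" and "P \<equiv> \<lambda>j. mat_pow (X ** W) j ** X"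
  assumes "invertible Y"
  shows "((\<lambda>s. Re (trace (mat_pow (X ** matrix_inv (A + s *\<^sub>R D)) k ** X **
                 (matrix_inv (A + s *\<^sub>R D) ** D ** matrix_inv (A + s *\<^sub>R D)))))
           has_real_derivative
             - (\<Sum>j<k. Re (trace (P j ** E ** P (k - 1 - j) ** E)))
             - 2 * Re (trace (P k ** E ** Y ** E))) (at t)"
proof -
  have "((\<lambda>s. mat_pow (X ** matrix_inv (A + s *\<^sub>R D)) k ** X **
            (matrix_inv (A + s *\<^sub>R D) ** D ** matrix_inv (A + s *\<^sub>R D)))
        has_vector_derivative
          P k ** - (2 *\<^sub>R (E ** Y ** E)) + - (\<Sum>j<k. P j ** E ** P (k - 1 - j)) ** E) (at t)"
    using assms(5) unfolding P_def E_def W_def Y_def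
    by (intro matrix_mult.has_vector_derivative has_vector_derivative_mat_pow_mult_line
        has_vector_derivative_inv_sandwich_line)
  moreover have "P k ** - (2 *\<^sub>R (E ** Y ** E)) + - (\<Sum>j<k. P j ** E ** P (k - 1 - j)) ** E
      = - (\<Sum>j<k. P j ** E ** P (k - 1 - j) ** E) - 2 *\<^sub>R (P k ** E ** Y ** E)"
    by (simp add: matrix_mult.minus_left matrix_mult.minus_right matrix_mult.sum_left
        matrix_mult.scaleR_right matrix_mul_assoc)
  ultimately show ?thesis
    using has_real_derivative_Re_trace
    by (fastforce simp: trace_sub trace_uminus trace_sum trace_scaleR)
qed

lemma f_Xn_line_second_derivative_pos:
  fixes X Y D :: "complex^'n^'n"
  defines "W \<equiv> matrix_inv Y"
  defines "E \<equiv> W ** D ** W" and "P \<equiv> \<lambda>j. mat_pow (X ** W) j ** X"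
  assumes X: "pos_def_mat X" and Y: "pos_def_mat Y" and D: "hermitian_mat D" "D \<noteq> 0"
  shows "0 < (\<Sum>j<k. Re (trace (P j ** E ** P (k - 1 - j) ** E))) + 2 * Re (trace (P k ** E ** Y ** E))"
proof -
  have W: "pos_def_mat W"
    unfolding W_def by (rule pos_def_mat_matrix_inv[OF Y])
  have P: "pos_def_mat (P j)" for j
    unfolding P_def by (rule pos_def_mat_pow_mult[OF X W])
  have E: "hermitian_mat E"
    using hermitian_mat_congruence[OF D(1), of W] by (simp add: E_def pos_def_mat_hermitian[OF W])
  have "E \<noteq> 0"
  proof
    assume "E = 0"
    moreover have "Y ** E ** Y = D"
      using matrix_inv_left[OF pos_def_mat_invertible[OF Y]] matrix_inv_right[OF pos_def_mat_invertible[OF Y]]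
      by (simp add: E_def W_def matrix_mul_assoc) (simp flip: matrix_mul_assoc)
    ultimately show False
      using D(2) by (simp add: matrix_mult.zero_left matrix_mult.zero_right)
  qed
  have pos: "0 < Re (trace (P i ** E ** Q ** E))" if "pos_def_mat Q" for i Q
    by (rule trace_sandwich_pos[OF P that E \<open>E \<noteq> 0\<close>])
  have "0 \<le> (\<Sum>j<k. Re (trace (P j ** E ** P (k - 1 - j) ** E)))"
    by (intro sum_nonneg less_imp_le pos P)
  moreover have "0 < Re (trace (P k ** E ** Y ** E))"
    by (rule pos[OF Y])
  ultimately show ?thesis
    by simp
qed

lemma f_Xn_segment_strict_convex:
  fixes X A B :: "complex^'n^'n"
  assumes X: "pos_def_mat X" and A: "pos_def_mat A" and B: "pos_def_mat B" and "A \<noteq> B"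
    and n: "1 \<le> n" and v: "0 < v" "v < 1"
  shows "f_Xn X n ((1 - v) *\<^sub>R A + v *\<^sub>R B) < (1 - v) * f_Xn X n A + v * f_Xn X n B"
proof -
  define D where "D = B - A"
  define W where "W = (\<lambda>s. matrix_inv (A + s *\<^sub>R D))"
  define E where "E = (\<lambda>s. W s ** D ** W s)"
  define P where "P = (\<lambda>s j. mat_pow (X ** W s) j ** X)"
  have line: "A + s *\<^sub>R D = (1 - s) *\<^sub>R A + s *\<^sub>R B" for s
    by (simp add: D_def algebra_simps)
  have Y: "pos_def_mat (A + s *\<^sub>R D)" if "s \<in> {0..1}" for s
    using convexD[OF convex_pos_def_mat, of A B "1 - s" s] A B that by (simp add: line)
  have "hermitian_mat D" "D \<noteq> 0"
    using A B \<open>A \<noteq> B\<close>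
    by (simp_all add: D_def hermitian_mat_def conj_transpose_diff pos_def_mat_hermitian)
  let ?g' = "\<lambda>s. - real n * Re (trace (P s (n - 1) ** E s))"
  let ?g'' = "\<lambda>s. real n * ((\<Sum>j<n - 1. Re (trace (P s j ** E s ** P s (n - 1 - 1 - j) ** E s)))
                          + 2 * Re (trace (P s (n - 1) ** E s ** (A + s *\<^sub>R D) ** E s)))"
  have "f_Xn X n (A + v *\<^sub>R D) < (1 - v) * f_Xn X n (A + 0 *\<^sub>R D) + v * f_Xn X n (A + 1 *\<^sub>R D)"
  proof (rule strict_convex_comb_of_deriv2_pos[where g' = ?g' and g'' = ?g''])
    fix s :: real
    assume s: "s \<in> {0..1}"
    then have inv: "invertible (A + s *\<^sub>R D)"
      using Y pos_def_mat_invertible by blast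
    show "((\<lambda>s. f_Xn X n (A + s *\<^sub>R D)) has_real_derivative ?g' s) (at s)"
      using has_real_derivative_f_Xn_line[OF inv] by (simp add: P_def E_def W_def matrix_mul_assoc)
    show "(?g' has_real_derivative ?g'' s) (at s)"
      using DERIV_cmult[OF has_real_derivative_f_Xn_line_derivative[OF inv, where k = "n - 1"],
          of "- real n"]
      by (simp add: P_def E_def W_def algebra_simps)
    show "0 < ?g'' s"
      using f_Xn_line_second_derivative_pos[OF X Y[OF s] \<open>hermitian_mat D\<close> \<open>D \<noteq> 0\<close>,
          where k = "n - 1"] n
      by (simp add: P_def E_def W_def)
  qed (use v in auto)
  then show ?thesis
    using line[of v] by (simp add: D_def)
qed

theorem lemma5p2:
  fixes X :: "complex^'m^'m" and n :: nat
  assumes "pos_def_mat X" and "n \<ge> 1"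
  shows "strict_convex_on {Y :: complex^'m^'m. pos_def_mat Y} (f_Xn X n)"
  unfolding strict_convex_on_def
proof (intro conjI convex_pos_def_mat ballI allI impI)
  fix A B :: "complex^'m^'m" and u v :: real
  assume "A \<in> {Y. pos_def_mat Y}" "B \<in> {Y. pos_def_mat Y}" "A \<noteq> B" "0 < u" "0 < v" "u + v = 1"
  moreover have "u = 1 - v"
    using \<open>u + v = 1\<close> by simp
  ultimately show "f_Xn X n (u *\<^sub>R A + v *\<^sub>R B) < u * f_Xn X n A + v * f_Xn X n B"
    using f_Xn_segment_strict_convex[OF assms(1) _ _ _ assms(2), of A B v] by simp
qed

end
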